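(* For every $\varepsilon\in[0,N)$, writing $C(0,r)=\{\zeta\in\mathbb C:|\zeta|=r\}$ and $F(\zeta)=\frac1N\mathrm{tr}\Big(\frac{1-\zeta}{N-\zeta(N-2+2Q)}\Big)$, \[ \min_{\zeta\in C(0,1-\varepsilon/N)}|F(\zeta)|=\frac1{N^2}\mathrm{tr}\left(\frac{\varepsilon}{2-2Q+\varepsilon-\frac{\varepsilon}N(2-2Q)}\right),\qquad \max_{\zeta\in C(0,1-\varepsilon/N)}|F(\zeta)|=\frac1{N^2}\mathrm{tr}\left(\frac{2-\frac\varepsilon N}{1+(1-\frac\varepsilon N)(1-\frac2N+\frac{2Q}N)}\right), \] and the minimum and maximum are attained at $\zeta=1-\varepsilon/N$ and $\zeta=-(1-\varepsilon/N)$ respectively. Here, for each eigenvalue $q$ of $Q$, the scalar function $\zeta\mapsto\frac{1-\zeta}{N-\zeta(N-2+2q)}$ is defined at its removable singularity in the natural way (for $q=1$ it equals the constant $1/N$), and when $\varepsilon=0$ the right-hand side of the minimum formula is read as $1/N^2$.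
   Context: $E$ is a finite set with $N=\#E>8$ elements; $Q$ is an irreducible stochastic matrix on $E$ with $Q(x,y)=Q(y,x)$ for all $x,y$ and $\mathrm{tr}(Q)=0$. For a function $f$ defined on the spectrum of $Q$ (which lies in $[-1,1]$), $f(Q)$ is defined by functional calculus, so $\mathrm{tr}(f(Q))=\sum_q f(q)$ over eigenvalues $q$ of $Q$ counted with multiplicity; fractions of the form $\frac{a(Q)}{b(Q)}$ mean $f(Q)$ with $f(q)=a(q)/b(q)$. *)

theory Defs
  imports "Jordan_Normal_Form.Char_Poly"
begin

text \<open>The state space E is identified with {0..<N}; Q is an N x N real matrix.\<close>

definition stochastic_mat :: "nat \<Rightarrow> real mat \<Rightarrow> bool" where
  "stochastic_mat N Q \<longleftrightarrow> Q \<in> carrier_mat N N \<and>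
     (\<forall>i<N. \<forall>j<N. Q $$ (i,j) \<ge> 0) \<and> (\<forall>i<N. (\<Sum>j<N. Q $$ (i,j)) = 1)"

definition symmetric_mat :: "nat \<Rightarrow> real mat \<Rightarrow> bool" where
  "symmetric_mat N Q \<longleftrightarrow> (\<forall>i<N. \<forall>j<N. Q $$ (i,j) = Q $$ (j,i))"

definition irreducible_mat :: "nat \<Rightarrow> real mat \<Rightarrow> bool" where
  "irreducible_mat N Q \<longleftrightarrow> (\<forall>i<N. \<forall>j<N. \<exists>k. (Q ^\<^sub>m k) $$ (i,j) > 0)"

definition mat_trace :: "nat \<Rightarrow> real mat \<Rightarrow> real" where
  "mat_trace N Q = (\<Sum>i<N. Q $$ (i,i))"

text \<open>Trace of f(Q) by functional calculus: sum of f over the eigenvalues of Q,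
  counted with (algebraic) multiplicity as roots of the characteristic polynomial.
  For a real symmetric matrix all eigenvalues are real.\<close>
definition tr_fun :: "real mat \<Rightarrow> (real \<Rightarrow> 'b::comm_semiring_1) \<Rightarrow> 'b" where
  "tr_fun Q f = (\<Sum>q\<in>{q. poly (char_poly Q) q = 0}. of_nat (order q (char_poly Q)) * f q)"

definition Fq :: "nat \<Rightarrow> real \<Rightarrow> complex \<Rightarrow> complex" where
  "Fq N q z = (if q = 1 then 1 / of_nat N
               else (1 - z) / (of_nat N - z * (of_nat N - 2 + 2 * complex_of_real q)))"

definition F :: "nat \<Rightarrow> real mat \<Rightarrow> complex \<Rightarrow> complex" where
  "F N Q z = tr_fun Q (\<lambda>q. Fq N q z) / of_nat N"

definition min_value :: "nat \<Rightarrow> real mat \<Rightarrow> real \<Rightarrow> real" where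
  "min_value N Q \<epsilon> = (if \<epsilon> = 0 then 1 / (real N)^2
     else tr_fun Q (\<lambda>q. \<epsilon> / (2 - 2*q + \<epsilon> - (\<epsilon> / real N) * (2 - 2*q))) / (real N)^2)"

definition max_value :: "nat \<Rightarrow> real mat \<Rightarrow> real \<Rightarrow> real" where
  "max_value N Q \<epsilon> = tr_fun Q (\<lambda>q. (2 - \<epsilon> / real N) /
      (1 + (1 - \<epsilon> / real N) * (1 - 2 / real N + 2 * q / real N))) / (real N)^2"

end

theory Submission
  imports Defs
begin

text \<open>Every eigenvalue \<open>q\<close> of the stochastic matrix \<open>Q\<close> lies in \<open>[-1, 1]\<close>, and for such \<open>q\<close>
  the scalar function \<open>f\<^sub>q(z) = (1 - z) / (N - z (N - 2 + 2q))\<close> satisfies, on the circle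
  \<open>|z| = r\<close>, both \<open>Re f\<^sub>q(z) \<ge> f\<^sub>q(r) \<ge> 0\<close> and \<open>|f\<^sub>q(z)| \<le> f\<^sub>q(-r)\<close>. Summing over the
  spectrum gives \<open>F(r) \<le> Re F(z) \<le> |F(z)| \<le> F(-r)\<close>, and the stated extreme values are
  rewritings of \<open>F(\<plusminus>r)\<close>. For \<open>\<epsilon> = 0\<close> only the eigenvalue 1 contributes to \<open>F(1)\<close>; it is simple
  because, by irreducibility, no principal minor of \<open>Q\<close> has an eigenvalue \<open>\<ge> 1\<close>.\<close>

lemma vec_abs_max_coord:
  fixes v :: "real vec"
  assumes v: "v \<in> carrier_vec n" and nz: "v \<noteq> 0\<^sub>v n"
  obtains j where "j < n" "v $ j \<noteq> 0" "\<forall>k<n. \<bar>v $ k\<bar> \<le> \<bar>v $ j\<bar>"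
proof -
  obtain i where i: "i < n" "v $ i \<noteq> 0"
    using v nz by (metis carrier_vecD eq_vecI index_zero_vec)
  have "Max ((\<lambda>k. \<bar>v $ k\<bar>) ` {..<n}) \<in> (\<lambda>k. \<bar>v $ k\<bar>) ` {..<n}"
    using i by (intro Max_in) auto
  then obtain j where j: "j < n" "\<bar>v $ j\<bar> = Max ((\<lambda>k. \<bar>v $ k\<bar>) ` {..<n})" by auto
  then have max: "\<forall>k<n. \<bar>v $ k\<bar> \<le> \<bar>v $ j\<bar>" by simp
  moreover have "v $ j \<noteq> 0" using max i by fastforce
  ultimately show ?thesis using that j(1) by blast
qed

lemma eigenvector_abs_coord_le:
  fixes B :: "real mat"
  assumes B: "B \<in> carrier_mat n n" and nonneg: "\<forall>i<n. \<forall>k<n. 0 \<le> B $$ (i,k)"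
    and v: "v \<in> carrier_vec n" and ev: "B *\<^sub>v v = l \<cdot>\<^sub>v v" and j: "j < n"
  shows "\<bar>l\<bar> * \<bar>v $ j\<bar> \<le> (\<Sum>k<n. B $$ (j,k) * \<bar>v $ k\<bar>)"
proof -
  have "l * v $ j = (B *\<^sub>v v) $ j" using ev v j by simp
  also have "\<dots> = (\<Sum>k<n. B $$ (j,k) * v $ k)"
    using B v j by (auto simp: scalar_prod_def lessThan_atLeast0)
  finally have "\<bar>l\<bar> * \<bar>v $ j\<bar> = \<bar>\<Sum>k<n. B $$ (j,k) * v $ k\<bar>" by (metis abs_mult)
  also have "\<dots> \<le> (\<Sum>k<n. \<bar>B $$ (j,k) * v $ k\<bar>)" by (rule sum_abs)
  also have "\<dots> = (\<Sum>k<n. B $$ (j,k) * \<bar>v $ k\<bar>)"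
    using nonneg j by (intro sum.cong) (auto simp: abs_mult)
  finally show ?thesis .
qed

lemma substochastic_eigenvector_max_coord:
  fixes B :: "real mat"
  assumes B: "B \<in> carrier_mat n n" and nonneg: "\<forall>i<n. \<forall>k<n. 0 \<le> B $$ (i,k)"
    and rows: "\<forall>i<n. (\<Sum>k<n. B $$ (i,k)) \<le> 1"
    and v: "v \<in> carrier_vec n" and ev: "B *\<^sub>v v = l \<cdot>\<^sub>v v"
    and j: "j < n" "v $ j \<noteq> 0" and max: "\<forall>k<n. \<bar>v $ k\<bar> \<le> \<bar>v $ j\<bar>"
  shows "\<bar>l\<bar> \<le> 1"
    and "1 \<le> \<bar>l\<bar> \<Longrightarrow>
      (\<Sum>k<n. B $$ (j,k)) = 1 \<and> (\<forall>k<n. 0 < B $$ (j,k) \<longrightarrow> \<bar>v $ k\<bar> = \<bar>v $ j\<bar>)"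
proof -
  define M where "M = \<bar>v $ j\<bar>"
  have M: "0 < M" using j unfolding M_def by simp
  have le1: "\<bar>l\<bar> * M \<le> (\<Sum>k<n. B $$ (j,k) * \<bar>v $ k\<bar>)"
    unfolding M_def by (rule eigenvector_abs_coord_le[OF B nonneg v ev j(1)])
  have le2: "(\<Sum>k<n. B $$ (j,k) * \<bar>v $ k\<bar>) \<le> (\<Sum>k<n. B $$ (j,k) * M)"
    using nonneg j max unfolding M_def by (intro sum_mono mult_left_mono) auto
  have le3: "(\<Sum>k<n. B $$ (j,k) * M) \<le> M"
    using rows j M by (simp add: sum_distrib_right[symmetric] mult_le_cancel_right1)
  have "\<bar>l\<bar> * M \<le> 1 * M" using le1 le2 le3 by linarith
  then show "\<bar>l\<bar> \<le> 1" using M by simp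
  assume "1 \<le> \<bar>l\<bar>"
  then have "M \<le> \<bar>l\<bar> * M" using M by simp
  then have eq2: "(\<Sum>k<n. B $$ (j,k) * \<bar>v $ k\<bar>) = (\<Sum>k<n. B $$ (j,k) * M)"
    and eq3: "(\<Sum>k<n. B $$ (j,k) * M) = M"
    using le1 le2 le3 by linarith+
  from eq3 M have "(\<Sum>k<n. B $$ (j,k)) = 1" by (simp add: sum_distrib_right[symmetric])
  moreover have "\<forall>k\<in>{..<n}. B $$ (j,k) * (M - \<bar>v $ k\<bar>) = 0"
  proof (rule sum_nonneg_eq_0_iff[THEN iffD1])
    show "(\<Sum>k<n. B $$ (j,k) * (M - \<bar>v $ k\<bar>)) = 0"
      using eq2 by (simp add: right_diff_distrib sum_subtractf)
  qed (use nonneg j max in \<open>auto simp: M_def\<close>)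
  then have "\<forall>k<n. 0 < B $$ (j,k) \<longrightarrow> \<bar>v $ k\<bar> = M"
    by (metis lessThan_iff less_irrefl mult_eq_0_iff right_minus_eq)
  ultimately show "(\<Sum>k<n. B $$ (j,k)) = 1 \<and> (\<forall>k<n. 0 < B $$ (j,k) \<longrightarrow> \<bar>v $ k\<bar> = \<bar>v $ j\<bar>)"
    unfolding M_def by blast
qed

lemma stochastic_char_poly_root_abs_le_1:
  assumes st: "stochastic_mat N Q" and root: "poly (char_poly Q) q = 0"
  shows "\<bar>q\<bar> \<le> 1"
proof -
  have Q: "Q \<in> carrier_mat N N" using st unfolding stochastic_mat_def by auto
  obtain v where "eigenvector Q v q"
    using eigenvalue_root_char_poly[OF Q] root unfolding eigenvalue_def by auto
  then have v: "v \<in> carrier_vec N" "v \<noteq> 0\<^sub>v N" "Q *\<^sub>v v = q \<cdot>\<^sub>v v"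
    using Q unfolding eigenvector_def by auto
  obtain j where "j < N" "v $ j \<noteq> 0" "\<forall>k<N. \<bar>v $ k\<bar> \<le> \<bar>v $ j\<bar>"
    using vec_abs_max_coord[OF v(1,2)] .
  then show ?thesis
    using substochastic_eigenvector_max_coord(1)[OF Q _ _ v(1,3)] st
    unfolding stochastic_mat_def by auto
qed

lemma stochastic_char_poly_root_1:
  assumes st: "stochastic_mat N Q" and N: "0 < N"
  shows "poly (char_poly Q) 1 = 0"
proof -
  have Q: "Q \<in> carrier_mat N N" using st unfolding stochastic_mat_def by auto
  define u where "u = vec N (\<lambda>_. 1 :: real)"
  have "Q *\<^sub>v u = 1 \<cdot>\<^sub>v u"
  proof (rule eq_vecI)
    fix i assume "i < dim_vec (1 \<cdot>\<^sub>v u)"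
    then have i: "i < N" unfolding u_def by simp
    have "(Q *\<^sub>v u) $ i = (\<Sum>k<N. Q $$ (i,k))"
      using Q i unfolding u_def by (auto simp: scalar_prod_def lessThan_atLeast0)
    then show "(Q *\<^sub>v u) $ i = (1 \<cdot>\<^sub>v u) $ i" using st i unfolding stochastic_mat_def u_def by simp
  qed (use Q in \<open>simp add: u_def\<close>)
  moreover have "u \<noteq> 0\<^sub>v N" using N unfolding u_def by (metis index_vec index_zero_vec(1) zero_neq_one)
  ultimately have "eigenvalue Q 1"
    using Q unfolding eigenvalue_def eigenvector_def by (auto intro!: exI[of _ u] simp: u_def)
  then show ?thesis using eigenvalue_root_char_poly[OF Q] by simp
qed

lemma mat_pow_closed_set_entry_zero:
  fixes Q :: "'a :: semiring_1 mat"
  assumes Q: "Q \<in> carrier_mat n n" and S: "S \<subseteq> {..<n}"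
    and closed: "\<forall>s\<in>S. \<forall>t<n. Q $$ (s,t) \<noteq> 0 \<longrightarrow> t \<in> S"
    and s: "s \<in> S" and t: "t < n" "t \<notin> S"
  shows "(Q ^\<^sub>m k) $$ (s,t) = 0"
  using t
proof (induction k arbitrary: t)
  case 0
  then show ?case using Q S s by auto
next
  case (Suc k)
  have "s < n" using S s by auto
  then have "(Q ^\<^sub>m Suc k) $$ (s,t) = (\<Sum>u\<in>{0..<n}. (Q ^\<^sub>m k) $$ (s,u) * Q $$ (u,t))"
    using Q Suc.prems by (simp add: scalar_prod_def)
  also have "\<dots> = 0"
    using closed Suc.prems Suc.IH s by (intro sum.neutral) (metis atLeastLessThan_iff mult_not_zero)
  finally show ?case .
qed

lemma irreducible_closed_set_eq:
  assumes irr: "irreducible_mat N Q" and Q: "Q \<in> carrier_mat N N"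
    and S: "S \<subseteq> {..<N}" "S \<noteq> {}"
    and closed: "\<forall>s\<in>S. \<forall>t<N. Q $$ (s,t) \<noteq> 0 \<longrightarrow> t \<in> S"
  shows "S = {..<N}"
proof (rule ccontr)
  assume "S \<noteq> {..<N}"
  then obtain t where t: "t < N" "t \<notin> S" using S by auto
  obtain s where s: "s \<in> S" using S by auto
  then obtain k where "(Q ^\<^sub>m k) $$ (s,t) > 0"
    using irr S t unfolding irreducible_mat_def by blast
  with mat_pow_closed_set_entry_zero[OF Q S(1) closed s t] show False by simp
qed

lemma mat_delete_diag_row_sum:
  fixes A :: "'a :: ab_group_add mat"
  assumes A: "A \<in> carrier_mat (Suc n) (Suc n)" and i: "i < Suc n" and a: "a < n"
  shows "(\<Sum>b<n. mat_delete A i i $$ (a,b))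
    = (\<Sum>t<Suc n. A $$ (insert_index i a, t)) - A $$ (insert_index i a, i)"
proof -
  have "(\<Sum>b<n. mat_delete A i i $$ (a,b)) = (\<Sum>b<n. A $$ (insert_index i a, insert_index i b))"
    using mat_delete_index[OF A i i a] by simp
  also have "\<dots> = (\<Sum>t\<in>insert_index i ` {..<n}. A $$ (insert_index i a, t))"
    by (simp add: sum.reindex insert_index_inj_on)
  also have "insert_index i ` {..<n} = {..<Suc n} - {i}"
    using insert_index_image[OF i] by (simp add: lessThan_atLeast0)
  also have "(\<Sum>t\<in>{..<Suc n} - {i}. A $$ (insert_index i a, t))
      = (\<Sum>t<Suc n. A $$ (insert_index i a, t)) - A $$ (insert_index i a, i)"
    using i by (simp add: sum_diff1)
  finally show ?thesis .
qed

lemma stochastic_minor_substochastic: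
  assumes st: "stochastic_mat (Suc n) Q" and i: "i < Suc n"
  shows "\<forall>a<n. \<forall>b<n. 0 \<le> mat_delete Q i i $$ (a,b)"
    and "\<forall>a<n. (\<Sum>b<n. mat_delete Q i i $$ (a,b)) = 1 - Q $$ (insert_index i a, i)"
proof -
  have Q: "Q \<in> carrier_mat (Suc n) (Suc n)" using st unfolding stochastic_mat_def by auto
  have ins: "insert_index i a < Suc n" if "a < n" for a
    using that unfolding insert_index_def by auto
  show "\<forall>a<n. \<forall>b<n. 0 \<le> mat_delete Q i i $$ (a,b)"
    using mat_delete_index[OF Q i i] ins st unfolding stochastic_mat_def by metis
  show "\<forall>a<n. (\<Sum>b<n. mat_delete Q i i $$ (a,b)) = 1 - Q $$ (insert_index i a, i)"
    using mat_delete_diag_row_sum[OF Q i] ins st unfolding stochastic_mat_def by simp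
qed

text \<open>A maximal-modulus eigenvector for an eigenvalue \<open>\<ge> 1\<close> of the minor would single out a
  closed class of states avoiding the deleted state \<open>i\<close>.\<close>
lemma stochastic_irreducible_minor_no_root_ge_1:
  assumes st: "stochastic_mat N Q" and irr: "irreducible_mat N Q"
    and i: "i < N" and x: "1 \<le> x"
  shows "poly (char_poly (mat_delete Q i i)) x \<noteq> 0"
proof
  assume root: "poly (char_poly (mat_delete Q i i)) x = 0"
  obtain n where Nn: "N = Suc n" using i by (cases N) auto
  have Q: "Q \<in> carrier_mat (Suc n) (Suc n)" using st Nn unfolding stochastic_mat_def by auto
  define B where "B = mat_delete Q i i"
  have B: "B \<in> carrier_mat n n" using mat_delete_carrier[OF Q] unfolding B_def by simp
  note nonneg = stochastic_minor_substochastic(1)[OF st[unfolded Nn] i[unfolded Nn], folded B_def]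
  note rows = stochastic_minor_substochastic(2)[OF st[unfolded Nn] i[unfolded Nn], folded B_def]
  have sub: "\<forall>a<n. (\<Sum>b<n. B $$ (a,b)) \<le> 1"
    using rows st i Nn unfolding stochastic_mat_def insert_index_def by auto
  obtain v where "eigenvector B v x"
    using eigenvalue_root_char_poly[OF B] root unfolding B_def eigenvalue_def by auto
  then have v: "v \<in> carrier_vec n" "v \<noteq> 0\<^sub>v n" "B *\<^sub>v v = x \<cdot>\<^sub>v v"
    using B unfolding eigenvector_def by auto
  obtain j where j: "j < n" "v $ j \<noteq> 0" and max: "\<forall>k<n. \<bar>v $ k\<bar> \<le> \<bar>v $ j\<bar>"
    using vec_abs_max_coord[OF v(1,2)] .
  have max_closed: "(\<Sum>b<n. B $$ (a,b)) = 1 \<and> (\<forall>b<n. 0 < B $$ (a,b) \<longrightarrow> \<bar>v $ b\<bar> = \<bar>v $ j\<bar>)"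
    if "a < n" "\<bar>v $ a\<bar> = \<bar>v $ j\<bar>" for a
    using substochastic_eigenvector_max_coord(2)[OF B nonneg sub v(1,3) that(1)] that j max x by simp
  define S where "S = insert_index i ` {a. a < n \<and> \<bar>v $ a\<bar> = \<bar>v $ j\<bar>}"
  have "S = {..<N}"
  proof (rule irreducible_closed_set_eq[OF irr])
    show "Q \<in> carrier_mat N N" "S \<subseteq> {..<N}" "S \<noteq> {}"
      using Q Nn j unfolding S_def insert_index_def by auto
    show "\<forall>s\<in>S. \<forall>t<N. Q $$ (s,t) \<noteq> 0 \<longrightarrow> t \<in> S"
    proof (intro ballI allI impI)
      fix s t assume s: "s \<in> S" and t: "t < N" and Qst: "Q $$ (s,t) \<noteq> 0"
      then obtain a where a: "a < n" "\<bar>v $ a\<bar> = \<bar>v $ j\<bar>" "s = insert_index i a"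
        unfolding S_def by auto
      have "Q $$ (s,i) = 0" using max_closed[OF a(1,2)] rows a by simp
      then have ti: "t \<noteq> i" using Qst by auto
      define b where "b = delete_index i t"
      have b: "b < n" "insert_index i b = t"
        using t ti i Nn insert_delete_index[OF ti] unfolding b_def delete_index_def by auto
      have "B $$ (a,b) = Q $$ (s,t)"
        using mat_delete_index[OF Q i[unfolded Nn] i[unfolded Nn] a(1) b(1)] a(3) b(2)
        unfolding B_def by simp
      then have "0 < B $$ (a,b)" using nonneg a(1) b(1) Qst by fastforce
      then have "\<bar>v $ b\<bar> = \<bar>v $ j\<bar>" using max_closed[OF a(1,2)] b(1) by blast
      then show "t \<in> S" using b unfolding S_def by blast
    qed
  qed
  moreover have "i \<notin> S" unfolding S_def insert_index_def by auto
  ultimately show False using i by auto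
qed

lemma poly_pos_if_no_root_ge:
  fixes p :: "real poly"
  assumes lc: "0 < lead_coeff p" and no_root: "\<forall>x\<ge>a. poly p x \<noteq> 0"
  shows "0 < poly p a"
proof (rule ccontr)
  assume "\<not> 0 < poly p a"
  then have neg: "poly p a < 0" using no_root by force
  obtain m where m: "\<forall>x\<ge>m. lead_coeff p \<le> poly p x" using poly_pinfty_gt_lc[OF lc] by auto
  define b where "b = max m (a + 1)"
  have "lead_coeff p \<le> poly p b" using m unfolding b_def by simp
  with lc have "0 < poly p b" by simp
  moreover have "a < b" unfolding b_def by simp
  ultimately obtain x where "a < x" "poly p x = 0" using poly_IVT_pos neg by blast
  with no_root show False by auto
qed

text \<open>The derivative of the characteristic polynomial is the sum of the characteristic
  polynomials of the principal minors, all of which are positive at 1.\<close>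
lemma stochastic_irreducible_order_1:
  assumes st: "stochastic_mat N Q" and irr: "irreducible_mat N Q" and N: "0 < N"
  shows "order 1 (char_poly Q) = 1"
proof -
  have Q: "Q \<in> carrier_mat N N" using st unfolding stochastic_mat_def by auto
  have "poly (pderiv (char_poly Q)) 1 = (\<Sum>i<N. poly (char_poly (mat_delete Q i i)) 1)"
    by (simp add: pderiv_char_poly[OF Q] poly_sum)
  also have "\<dots> > 0"
  proof (rule sum_pos)
    fix i assume i: "i \<in> {..<N}"
    have "mat_delete Q i i \<in> carrier_mat (N - 1) (N - 1)" using mat_delete_carrier[OF Q] .
    then have "lead_coeff (char_poly (mat_delete Q i i)) = 1"
      using degree_monic_char_poly by metis
    then show "0 < poly (char_poly (mat_delete Q i i)) 1"
      using stochastic_irreducible_minor_no_root_ge_1[OF st irr] i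
      by (intro poly_pos_if_no_root_ge) auto
  qed (use N in auto)
  finally have "order 1 (pderiv (char_poly Q)) = 0" by (intro order_0I) simp
  moreover have "char_poly Q \<noteq> 0" using degree_monic_char_poly[OF Q] by auto
  ultimately show ?thesis
    using order_pderiv[OF _ stochastic_char_poly_root_1[OF st N]] by simp
qed

lemma tr_fun_mono:
  fixes f g :: "real \<Rightarrow> real"
  assumes "\<And>q. poly (char_poly Q) q = 0 \<Longrightarrow> f q \<le> g q"
  shows "tr_fun Q f \<le> tr_fun Q g"
  unfolding tr_fun_def using assms by (intro sum_mono mult_left_mono) auto

lemma tr_fun_nonneg:
  fixes f :: "real \<Rightarrow> real"
  assumes "\<And>q. poly (char_poly Q) q = 0 \<Longrightarrow> 0 \<le> f q"
  shows "0 \<le> tr_fun Q f"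
  using tr_fun_mono[of Q "\<lambda>_. 0" f] assms by (simp add: tr_fun_def)

lemma tr_fun_cmult: "tr_fun Q (\<lambda>q. c * f q) = c * tr_fun Q f"
  unfolding tr_fun_def by (simp add: sum_distrib_left algebra_simps)

lemma tr_fun_of_real: "tr_fun Q (\<lambda>q. of_real (f q)) = of_real (tr_fun Q f)"
  unfolding tr_fun_def by simp

lemma Re_tr_fun: "Re (tr_fun Q f) = tr_fun Q (\<lambda>q. Re (f q))"
  unfolding tr_fun_def by (simp add: Re_sum)

lemma norm_tr_fun_le: "cmod (tr_fun Q f) \<le> tr_fun Q (\<lambda>q. cmod (f q))"
  unfolding tr_fun_def by (rule order_trans[OF norm_sum]) (simp add: norm_mult)

lemma tr_fun_indicator:
  assumes "char_poly Q \<noteq> 0"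
  shows "tr_fun Q (\<lambda>q. if q = a then c else 0) = of_nat (order a (char_poly Q)) * c"
proof (cases "poly (char_poly Q) a = 0")
  case True
  have "finite {q. poly (char_poly Q) q = 0}" using assms by (rule poly_roots_finite)
  then show ?thesis using True unfolding tr_fun_def by (simp add: if_distrib cong: if_cong)
next
  case False
  then show ?thesis using assms unfolding tr_fun_def by (auto simp: order_root intro: sum.neutral)
qed

text \<open>On the circle \<open>|z| = r\<close>, with \<open>z = x + iy\<close>, clearing the positive denominators turns
  both estimates into polynomial identities modulo \<open>x\<^sup>2 + y\<^sup>2 - r\<^sup>2\<close>, whose remaining terms are
  nonnegative multiples of \<open>r - x\<close> and \<open>r + x\<close> respectively.\<close>
lemma Re_quotient_on_circle_ge:
  fixes n b r :: real and z :: complex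
  assumes b: "0 < b" "b < n" and r: "0 \<le> r" "r \<le> 1" and z: "cmod z = r"
  shows "(1 - r) / (n - b * r) \<le> Re ((1 - z) / (of_real n - z * of_real b))"
proof -
  define x where "x = Re z"
  define y where "y = Im z"
  have xy: "x\<^sup>2 + y\<^sup>2 = r\<^sup>2" using z cmod_power2[of z] unfolding x_def y_def by simp
  have xr: "\<bar>x\<bar> \<le> r" using abs_Re_le_cmod[of z] z unfolding x_def by simp
  have nbr: "0 < n - b * r" using b r by (smt (verit) mult_left_le)
  have nbx: "0 < n - b * x" using nbr b xr by (smt (verit) abs_le_D1 mult_left_mono)
  have den: "0 < (n - b * x)\<^sup>2 + (b * y)\<^sup>2" using nbx by (simp add: add_pos_nonneg)
  have "((1 - x) * (n - b * x) + y * (b * y)) * (n - b * r) - (1 - r) * ((n - b * x)\<^sup>2 + (b * y)\<^sup>2)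
      = (n - b) * (n + b * r) * (r - x) + b * (n - b) * (x\<^sup>2 + y\<^sup>2 - r\<^sup>2)"
    by (simp add: algebra_simps power2_eq_square)
  also have "\<dots> = (n - b) * (n + b * r) * (r - x)" using xy by simp
  also have "\<dots> \<ge> 0" using b r xr by (intro mult_nonneg_nonneg) auto
  finally have "(1 - r) / (n - b * r) \<le> ((1 - x) * (n - b * x) + y * (b * y)) / ((n - b * x)\<^sup>2 + (b * y)\<^sup>2)"
    using den nbr by (simp add: divide_le_eq le_divide_eq mult.commute)
  also have "\<dots> = Re ((1 - z) / (of_real n - z * of_real b))"
    unfolding Re_divide by (simp add: x_def y_def mult.commute)
  finally show ?thesis .
qed

lemma norm_quotient_on_circle_le:
  fixes n b r :: real and z :: complex
  assumes b: "0 < b" "b < n" and r: "0 \<le> r" "r \<le> 1" and z: "cmod z = r"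
  shows "cmod ((1 - z) / (of_real n - z * of_real b)) \<le> (1 + r) / (n + b * r)"
proof -
  define x where "x = Re z"
  define y where "y = Im z"
  have xy: "x\<^sup>2 + y\<^sup>2 = r\<^sup>2" using z cmod_power2[of z] unfolding x_def y_def by simp
  have xr: "\<bar>x\<bar> \<le> r" using abs_Re_le_cmod[of z] z unfolding x_def by simp
  have nbr: "0 < n - b * r" using b r by (smt (verit) mult_left_le)
  have nbx: "0 < n - b * x" using nbr b xr by (smt (verit) abs_le_D1 mult_left_mono)
  have num: "(cmod (1 - z))\<^sup>2 = (1 - x)\<^sup>2 + y\<^sup>2"
    unfolding cmod_power2 by (simp add: x_def y_def)
  have den: "(cmod (of_real n - z * of_real b))\<^sup>2 = (n - b * x)\<^sup>2 + (b * y)\<^sup>2"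
    unfolding cmod_power2 by (simp add: x_def y_def mult.commute)
  have den_pos: "0 < cmod (of_real n - z * of_real b)"
  proof -
    have "0 < (n - b * x)\<^sup>2 + (b * y)\<^sup>2" using nbx by (simp add: add_pos_nonneg)
    then show ?thesis using den by (metis norm_ge_zero order_le_less power_zero_numeral zero_power2)
  qed
  have "(1 + r)\<^sup>2 * ((n - b * x)\<^sup>2 + (b * y)\<^sup>2) - ((1 - x)\<^sup>2 + y\<^sup>2) * (n + b * r)\<^sup>2
      = 2 * (n - b) * (n - b * r\<^sup>2) * (x + r) + ((1 + r)\<^sup>2 * b\<^sup>2 - (n + b * r)\<^sup>2) * (x\<^sup>2 + y\<^sup>2 - r\<^sup>2)"
    by (simp add: algebra_simps power2_eq_square)
  also have "\<dots> = 2 * (n - b) * (n - b * r\<^sup>2) * (x + r)" using xy by simp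
  also have "\<dots> \<ge> 0"
  proof -
    have "b * r\<^sup>2 \<le> b" using b r by (simp add: power_le_one)
    then have "0 \<le> n - b * r\<^sup>2" using b by linarith
    then show ?thesis using b xr by (intro mult_nonneg_nonneg) auto
  qed
  finally have "(cmod (1 - z) * (n + b * r))\<^sup>2 \<le> ((1 + r) * cmod (of_real n - z * of_real b))\<^sup>2"
    using num den by (simp add: power_mult_distrib)
  then have "cmod (1 - z) * (n + b * r) \<le> (1 + r) * cmod (of_real n - z * of_real b)"
    by (rule power2_le_imp_le) (use r in simp)
  moreover have "0 < n + b * r" using b r by (smt (verit) mult_nonneg_nonneg)
  ultimately show ?thesis using den_pos by (simp add: norm_divide divide_le_eq le_divide_eq mult.commute)
qed

definition Fq_real :: "nat \<Rightarrow> real \<Rightarrow> real \<Rightarrow> real" where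
  "Fq_real N q x = (if q = 1 then 1 / real N
                    else (1 - x) / (real N - x * (real N - 2 + 2 * q)))"

lemma Fq_of_real: "Fq N q (of_real x) = of_real (Fq_real N q x)"
  unfolding Fq_def Fq_real_def by simp

lemma Fq_real_1: "Fq_real N q 1 = (if q = 1 then 1 / real N else 0)"
  unfolding Fq_real_def by simp

lemma Fq_real_nonneg:
  assumes N: "4 < N" and q: "-1 \<le> q" "q \<le> 1" and x: "\<bar>x\<bar> \<le> 1"
  shows "0 \<le> Fq_real N q x"
proof (cases "q = 1")
  case False
  have "x * (real N - 2 + 2 * q) \<le> real N - 2 + 2 * q"
    using mult_right_mono[of x 1 "real N - 2 + 2 * q"] N q x by (simp add: abs_le_iff)
  moreover have "q < 1" using q False by simp
  ultimately have "0 < real N - x * (real N - 2 + 2 * q)" by linarith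
  then show ?thesis using x False unfolding Fq_real_def by simp
qed (simp add: Fq_real_def)

lemma Fq_eq_quotient:
  assumes "q \<noteq> 1"
  shows "Fq N q z = (1 - z) / (of_real (real N) - z * of_real (real N - 2 + 2 * q))"
  using assms unfolding Fq_def by simp

lemma Re_Fq_ge_on_circle:
  assumes N: "4 < N" and q: "-1 \<le> q" "q \<le> 1" and r: "0 \<le> r" "r \<le> 1" and z: "cmod z = r"
  shows "Fq_real N q r \<le> Re (Fq N q z)"
proof (cases "q = 1")
  case False
  then show ?thesis
    using Re_quotient_on_circle_ge[of "real N - 2 + 2 * q" "real N", OF _ _ r z] N q
    unfolding Fq_eq_quotient[OF False] Fq_real_def by (simp add: mult.commute)
qed (simp add: Fq_def Fq_real_def)

lemma norm_Fq_le_on_circle: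
  assumes N: "4 < N" and q: "-1 \<le> q" "q \<le> 1" and r: "0 \<le> r" "r \<le> 1" and z: "cmod z = r"
  shows "cmod (Fq N q z) \<le> Fq_real N q (- r)"
proof (cases "q = 1")
  case False
  then show ?thesis
    using norm_quotient_on_circle_le[of "real N - 2 + 2 * q" "real N", OF _ _ r z] N q
    unfolding Fq_eq_quotient[OF False] Fq_real_def by (simp add: mult.commute)
qed (simp add: Fq_def Fq_real_def norm_divide)

lemma F_of_real: "F N Q (of_real x) = of_real (tr_fun Q (\<lambda>q. Fq_real N q x) / real N)"
  unfolding F_def Fq_of_real tr_fun_of_real by simp

lemma Re_F_ge_on_circle:
  assumes st: "stochastic_mat N Q" and N: "4 < N" and r: "0 \<le> r" "r \<le> 1" and z: "cmod z = r"
  shows "tr_fun Q (\<lambda>q. Fq_real N q r) / real N \<le> Re (F N Q z)"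
proof -
  have "tr_fun Q (\<lambda>q. Fq_real N q r) \<le> tr_fun Q (\<lambda>q. Re (Fq N q z))"
    using stochastic_char_poly_root_abs_le_1[OF st] Re_Fq_ge_on_circle[OF N _ _ r z]
    by (intro tr_fun_mono) (simp add: abs_le_iff)
  then show ?thesis unfolding F_def by (simp add: Re_tr_fun divide_right_mono)
qed

lemma norm_F_le_on_circle:
  assumes st: "stochastic_mat N Q" and N: "4 < N" and r: "0 \<le> r" "r \<le> 1" and z: "cmod z = r"
  shows "cmod (F N Q z) \<le> tr_fun Q (\<lambda>q. Fq_real N q (- r)) / real N"
proof -
  have "cmod (tr_fun Q (\<lambda>q. Fq N q z)) \<le> tr_fun Q (\<lambda>q. cmod (Fq N q z))"
    by (rule norm_tr_fun_le)
  also have "\<dots> \<le> tr_fun Q (\<lambda>q. Fq_real N q (- r))"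
    using stochastic_char_poly_root_abs_le_1[OF st] norm_Fq_le_on_circle[OF N _ _ r z]
    by (intro tr_fun_mono) (simp add: abs_le_iff)
  finally show ?thesis unfolding F_def by (simp add: norm_divide divide_right_mono)
qed

lemma min_value_summand_eq:
  assumes N: "0 < N" and e: "\<epsilon> \<noteq> 0"
  shows "\<epsilon> / (2 - 2 * q + \<epsilon> - (\<epsilon> / real N) * (2 - 2 * q)) = real N * Fq_real N q (1 - \<epsilon> / real N)"
proof (cases "q = 1")
  case False
  define t where "t = \<epsilon> / real N"
  have t: "real N * t = \<epsilon>" using N unfolding t_def by simp
  have "real N * Fq_real N q (1 - t) = (real N * t) / (real N - (1 - t) * (real N - 2 + 2 * q))"
    using False unfolding Fq_real_def by simp
  also have "real N - (1 - t) * (real N - 2 + 2 * q) = 2 - 2 * q + \<epsilon> - t * (2 - 2 * q)"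
    unfolding t[symmetric] by (simp add: algebra_simps)
  finally show ?thesis using N unfolding t t_def by simp
qed (use N e in \<open>simp add: Fq_real_def\<close>)

lemma max_value_summand_eq:
  assumes N: "0 < N" and e: "0 \<le> \<epsilon>" "\<epsilon> < real N"
  shows "(2 - \<epsilon> / real N) / (1 + (1 - \<epsilon> / real N) * (1 - 2 / real N + 2 * q / real N))
    = real N * Fq_real N q (- (1 - \<epsilon> / real N))"
proof -
  define r where "r = 1 - \<epsilon> / real N"
  define b where "b = real N - 2 + 2 * q"
  have r: "0 < r" using e N unfolding r_def by simp
  have "1 + r * (1 - 2 / real N + 2 * q / real N) = (real N + r * b) / real N"
    using N unfolding b_def by (simp add: diff_divide_distrib add_divide_distrib algebra_simps)
  moreover have "2 - \<epsilon> / real N = 1 + r" unfolding r_def by simp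
  ultimately have "(2 - \<epsilon> / real N) / (1 + r * (1 - 2 / real N + 2 * q / real N))
      = real N * ((1 + r) / (real N + r * b))"
    by simp
  also have "\<dots> = real N * Fq_real N q (- r)"
  proof (cases "q = 1")
    case True
    have "real N + r * real N = real N * (1 + r)" by (simp add: algebra_simps)
    then show ?thesis using True r N unfolding Fq_real_def b_def by simp
  qed (simp add: Fq_real_def b_def)
  finally show ?thesis unfolding r_def .
qed

lemma min_value_eq:
  assumes st: "stochastic_mat N Q" and irr: "irreducible_mat N Q" and N: "0 < N"
  shows "min_value N Q \<epsilon> = tr_fun Q (\<lambda>q. Fq_real N q (1 - \<epsilon> / real N)) / real N"
proof (cases "\<epsilon> = 0")
  case True
  have Q: "Q \<in> carrier_mat N N" using st unfolding stochastic_mat_def by auto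
  then have "char_poly Q \<noteq> 0" using degree_monic_char_poly[OF Q] by auto
  then have "tr_fun Q (\<lambda>q. Fq_real N q 1) = 1 / real N"
    using tr_fun_indicator[of Q 1 "1 / real N"] stochastic_irreducible_order_1[OF st irr N]
    unfolding Fq_real_1 by simp
  then show ?thesis using True unfolding min_value_def by (simp add: power2_eq_square)
next
  case False
  then show ?thesis
    using N unfolding min_value_def min_value_summand_eq[OF N False] tr_fun_cmult
    by (simp add: power2_eq_square)
qed

lemma max_value_eq:
  assumes N: "0 < N" and "0 \<le> \<epsilon>" "\<epsilon> < real N"
  shows "max_value N Q \<epsilon> = tr_fun Q (\<lambda>q. Fq_real N q (- (1 - \<epsilon> / real N))) / real N"
  using N unfolding max_value_def max_value_summand_eq[OF assms] tr_fun_cmult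
  by (simp add: power2_eq_square)

theorem lemma3p6:
  fixes N :: nat and Q :: "real mat" and \<epsilon> :: real
  assumes "N > 8"
    and "stochastic_mat N Q"
    and "symmetric_mat N Q"
    and "irreducible_mat N Q"
    and "mat_trace N Q = 0"
    and "0 \<le> \<epsilon>" and "\<epsilon> < real N"
  defines "r \<equiv> 1 - \<epsilon> / real N"
  shows "(\<forall>z. cmod z = r \<longrightarrow> min_value N Q \<epsilon> \<le> cmod (F N Q z) \<and> cmod (F N Q z) \<le> max_value N Q \<epsilon>)
       \<and> cmod (F N Q (complex_of_real r)) = min_value N Q \<epsilon>
       \<and> cmod (F N Q (complex_of_real (- r))) = max_value N Q \<epsilon>"
proof -
  note st = assms(2) and irr = assms(4) and \<epsilon> = assms(6,7)
  have N: "4 < N" "0 < N" using assms(1) by auto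
  have r: "0 \<le> r" "r \<le> 1" unfolding r_def using \<epsilon> by (auto simp: field_simps)
  define A where "A = tr_fun Q (\<lambda>q. Fq_real N q r) / real N"
  define B where "B = tr_fun Q (\<lambda>q. Fq_real N q (- r)) / real N"
  have "0 \<le> A" "0 \<le> B"
    using stochastic_char_poly_root_abs_le_1[OF st] Fq_real_nonneg[OF N(1)] r unfolding A_def B_def
    by (auto intro!: divide_nonneg_nonneg tr_fun_nonneg simp: abs_le_iff)
  moreover have "A \<le> cmod (F N Q z)" "cmod (F N Q z) \<le> B" if "cmod z = r" for z
    using Re_F_ge_on_circle[OF st N(1) r that] complex_Re_le_cmod[of "F N Q z"]
      norm_F_le_on_circle[OF st N(1) r that]
    unfolding A_def B_def by linarith+
  moreover have "min_value N Q \<epsilon> = A"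
    using min_value_eq[OF st irr N(2)] unfolding A_def r_def .
  moreover have "max_value N Q \<epsilon> = B"
    using max_value_eq[OF N(2) \<epsilon>] unfolding B_def r_def .
  moreover have "F N Q (of_real r) = of_real A" "F N Q (of_real (- r)) = of_real B"
    unfolding F_of_real A_def B_def by simp_all
  ultimately show ?thesis by simp
qed

end
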